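(* For every quantifier-free $\tau_0$-formula $\varphi$ and every variable $x$ there exists a quantifier-free $\tau_0$-formula $\psi$ such that $\exists x.\,\varphi$ is equivalent to $\psi$ over $\mathfrak{L}$.
   Context: $\mathfrak{L}$ is the structure with domain $\mathbb{Q}$ and signature $\tau_0=\{<,1\}\cup\{c\cdot\}_{c\in\mathbb{Q}}$, where $<$ is the usual strict order on $\mathbb{Q}$, $1$ is a constant symbol denoting $1$, and each $c\cdot$ is a unary function symbol denoting $x\mapsto cx$. *)

theory Defs
  imports Complex_Main
begin

text \<open>Terms of the signature tau0 = {<, 1} plus unary c* for each rational c.
  Variables are indexed by natural numbers.\<close>
datatype tm = Var nat | One | Scal rat tm

datatype qf = Eq tm tm | Less tm tm | FFalse | Neg qf | Conj qf qf | Disj qf qf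

text \<open>Semantics in the structure L with domain Q.\<close>
fun tm_val :: "(nat \<Rightarrow> rat) \<Rightarrow> tm \<Rightarrow> rat" where
  "tm_val v (Var i) = v i"
| "tm_val v One = 1"
| "tm_val v (Scal c t) = c * tm_val v t"

fun qf_sat :: "(nat \<Rightarrow> rat) \<Rightarrow> qf \<Rightarrow> bool" where
  "qf_sat v (Eq s t) = (tm_val v s = tm_val v t)"
| "qf_sat v (Less s t) = (tm_val v s < tm_val v t)"
| "qf_sat v FFalse = False"
| "qf_sat v (Neg p) = (\<not> qf_sat v p)"
| "qf_sat v (Conj p q) = (qf_sat v p \<and> qf_sat v q)"
| "qf_sat v (Disj p q) = (qf_sat v p \<or> qf_sat v q)"

end

theory Submission
  imports Defs
begin

text \<open>Under \<open>x := a\<close> an atom \<open>s \<lhd> t\<close> compares the affine function \<open>d * a + e\<close> with 0, where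
  \<open>d\<close> is the difference of the coefficients of \<open>x\<close> in \<open>s\<close> and \<open>t\<close> and \<open>e\<close> that of their \<open>x\<close>-free
  parts. So the truth of \<open>\<phi>\<close> depends only on the signs of finitely many affine functions and is
  constant between consecutive roots \<open>-e/d\<close>. Hence \<open>\<phi>\<close> has a witness iff it holds far to the
  left, at a root, or just to the right of a root. Each of these is quantifier-free: at a root \<open>u\<close>
  by substitution; far to the left the sign of \<open>d * a + e\<close> is \<open>- sgn d\<close> (or \<open>sgn e\<close> if \<open>d = 0\<close>),
  and just to the right of \<open>u\<close> it is its sign at \<open>u\<close> (or \<open>sgn d\<close> if that is 0). Terms have no
  addition, so midpoints of roots are unavailable as test points; hence the infinitesimal
  test points \<open>u + \<epsilon>\<close>.\<close>

text \<open>An order-theoretic \<open>at_right\<close>: \<^typ>\<open>rat\<close> carries no topology in the library.\<close>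
definition right_nbhds :: "'a::linorder \<Rightarrow> 'a filter" where
  "right_nbhds r = (INF b\<in>{r<..}. principal {r<..<b})"

lemma eventually_right_nbhds:
  fixes r :: "'a::{linorder,no_top}"
  shows "eventually P (right_nbhds r) \<longleftrightarrow> (\<exists>b>r. \<forall>a. r < a \<and> a < b \<longrightarrow> P a)"
  unfolding right_nbhds_def
proof (subst eventually_INF_base)
  show "\<exists>c\<in>{r<..}. principal {r<..<c} \<le> inf (principal {r<..<a}) (principal {r<..<b})"
    if "a \<in> {r<..}" "b \<in> {r<..}" for a b
    using that by (intro bexI[of _ "min a b"]) auto
qed (auto simp: eventually_principal gt_ex Bex_def)

lemma right_nbhds_neq_bot: "right_nbhds (r::'a::{linorder,no_top,dense_order}) \<noteq> bot"
  unfolding trivial_limit_def eventually_right_nbhds using dense by blast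

lemma sgn_affine:
  fixes d e a :: "'a::linordered_field"
  assumes "d \<noteq> 0"
  shows "sgn (d * a + e) = sgn d * sgn (a + e / d)"
proof -
  have "d * a + e = d * (a + e / d)"
    using assms by (simp add: field_simps)
  then show ?thesis by (simp add: sgn_mult)
qed

lemma sgn_affine_eq_on_interval:
  fixes d e p q :: "'a::linordered_field"
  assumes "p \<le> q" and "d \<noteq> 0 \<Longrightarrow> - e / d \<notin> {p..q}"
  shows "sgn (d * p + e) = sgn (d * q + e)"
proof (cases "d = 0")
  case False
  then have "sgn (p + e / d) = sgn (q + e / d)"
    using assms by (auto simp: sgn_if)
  then show ?thesis using False by (simp add: sgn_affine)
qed simp

lemma eventually_sgn_affine_at_bot:
  fixes d e :: "'a::linordered_field"
  shows "eventually (\<lambda>a. sgn (d * a + e) = (if d = 0 then sgn e else - sgn d)) at_bot"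
proof (cases "d = 0")
  case False
  have "eventually (\<lambda>a. a < - e / d) at_bot"
    by (simp add: eventually_at_bot_dense)
  then show ?thesis
    by eventually_elim (use False in \<open>simp add: sgn_affine\<close>)
qed simp

lemma eventually_sgn_affine_right_nbhds:
  fixes d e r :: "'a::linordered_field"
  shows "eventually (\<lambda>a. sgn (d * a + e) = (if d * r + e = 0 then sgn d else sgn (d * r + e)))
           (right_nbhds r)"
proof (cases "d = 0")
  case False
  define z where "z = - e / d"
  show ?thesis
  proof (cases "d * r + e = 0")
    case True
    then have "r = z" using False by (simp add: z_def field_simps)
    then show ?thesis
      using False by (auto simp: eventually_right_nbhds sgn_affine z_def intro: gt_ex)
  next
    case nonroot: False
    have "\<exists>b>r. z \<notin> {r<..<b}"
      by (cases "r < z") (auto intro: exI[of _ "r + 1"])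
    moreover have "z \<noteq> r"
      using nonroot False by (auto simp: z_def field_simps)
    ultimately have "eventually (\<lambda>a. r \<le> a \<and> z \<notin> {r..a}) (right_nbhds r)"
      by (auto simp: eventually_right_nbhds)
    then show ?thesis
      by eventually_elim (use False nonroot sgn_affine_eq_on_interval[of r _ d e] in \<open>auto simp: z_def\<close>)
  qed
qed (simp add: eventually_right_nbhds gt_ex)

fun tm_coeff :: "nat \<Rightarrow> tm \<Rightarrow> rat" where
  "tm_coeff x (Var i) = (if i = x then 1 else 0)"
| "tm_coeff x One = 0"
| "tm_coeff x (Scal c t) = c * tm_coeff x t"

fun tm_subst :: "nat \<Rightarrow> tm \<Rightarrow> tm \<Rightarrow> tm" where
  "tm_subst x u (Var i) = (if i = x then u else Var i)"
| "tm_subst x u One = One"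
| "tm_subst x u (Scal c t) = Scal c (tm_subst x u t)"

lemma tm_val_tm_subst: "tm_val v (tm_subst x u t) = tm_val (v(x := tm_val v u)) t"
  by (induction t) auto

lemma tm_val_fun_upd: "tm_val (v(x := a)) t = tm_coeff x t * a + tm_val (v(x := 0)) t"
  by (induction t) (auto simp: algebra_simps)

lemma tm_val_fun_upd_zero_if_coeff_nonzero:
  "tm_coeff x t \<noteq> 0 \<Longrightarrow> tm_val (v(x := 0)) t = 0"
  by (induction t) auto

definition atom_slope :: "nat \<Rightarrow> tm \<Rightarrow> tm \<Rightarrow> rat" where
  "atom_slope x s t = tm_coeff x s - tm_coeff x t"

definition atom_offset :: "(nat \<Rightarrow> rat) \<Rightarrow> nat \<Rightarrow> tm \<Rightarrow> tm \<Rightarrow> rat" where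
  "atom_offset v x s t = tm_val (v(x := 0)) s - tm_val (v(x := 0)) t"

lemma tm_val_diff_fun_upd:
  "tm_val (v(x := a)) s - tm_val (v(x := a)) t = atom_slope x s t * a + atom_offset v x s t"
  by (simp add: tm_val_fun_upd[of v x a s] tm_val_fun_upd[of v x a t] atom_slope_def
      atom_offset_def algebra_simps)

text \<open>Without addition the root \<open>-e/d\<close> must be a single scaled term. This works because a term
  with nonzero coefficient of \<open>x\<close> is a multiple of \<open>x\<close>, so its \<open>x\<close>-free part vanishes.\<close>
definition tm_root :: "nat \<Rightarrow> tm \<Rightarrow> tm \<Rightarrow> tm" where
  "tm_root x s t =
     (if tm_coeff x s \<noteq> 0 then Scal (1 / atom_slope x s t) (tm_subst x (Scal 0 One) t)
      else Scal (- 1 / atom_slope x s t) (tm_subst x (Scal 0 One) s))"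

lemma tm_val_tm_root:
  assumes "atom_slope x s t \<noteq> 0"
  shows "tm_val v (tm_root x s t) = - atom_offset v x s t / atom_slope x s t"
  using assms tm_val_fun_upd_zero_if_coeff_nonzero[of x s v]
    tm_val_fun_upd_zero_if_coeff_nonzero[of x t v]
  by (auto simp: tm_root_def tm_val_tm_subst atom_slope_def atom_offset_def divide_simps)

lemma qf_sat_atoms_sgn:
  "qf_sat v (Eq s t) \<longleftrightarrow> sgn (tm_val v s - tm_val v t) = 0"
  "qf_sat v (Less s t) \<longleftrightarrow> sgn (tm_val v s - tm_val v t) = - 1"
  by (simp_all add: sgn_0_0 sgn_1_neg)

fun qf_map_atoms :: "(tm \<Rightarrow> tm \<Rightarrow> qf) \<Rightarrow> (tm \<Rightarrow> tm \<Rightarrow> qf) \<Rightarrow> qf \<Rightarrow> qf" where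
  "qf_map_atoms eq lt (Eq s t) = eq s t"
| "qf_map_atoms eq lt (Less s t) = lt s t"
| "qf_map_atoms eq lt FFalse = FFalse"
| "qf_map_atoms eq lt (Neg p) = Neg (qf_map_atoms eq lt p)"
| "qf_map_atoms eq lt (Conj p q) = Conj (qf_map_atoms eq lt p) (qf_map_atoms eq lt q)"
| "qf_map_atoms eq lt (Disj p q) = Disj (qf_map_atoms eq lt p) (qf_map_atoms eq lt q)"

fun qf_atoms :: "qf \<Rightarrow> (tm \<times> tm) list" where
  "qf_atoms (Eq s t) = [(s, t)]"
| "qf_atoms (Less s t) = [(s, t)]"
| "qf_atoms FFalse = []"
| "qf_atoms (Neg p) = qf_atoms p"
| "qf_atoms (Conj p q) = qf_atoms p @ qf_atoms q"
| "qf_atoms (Disj p q) = qf_atoms p @ qf_atoms q"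

lemma qf_map_atoms_Eq_Less [simp]: "qf_map_atoms Eq Less p = p"
  by (induction p) auto

lemma qf_sat_qf_map_atoms_cong:
  assumes "\<forall>(s, t) \<in> set (qf_atoms p).
    (qf_sat w (Eq s t) \<longleftrightarrow> qf_sat v (eq s t)) \<and> (qf_sat w (Less s t) \<longleftrightarrow> qf_sat v (lt s t))"
  shows "qf_sat w p \<longleftrightarrow> qf_sat v (qf_map_atoms eq lt p)"
  using assms by (induction p) auto

lemma eventually_qf_sat_qf_map_atoms:
  assumes "\<And>s t. (s, t) \<in> set (qf_atoms p) \<Longrightarrow>
             eventually (\<lambda>a. sgn (tm_val (w a) s - tm_val (w a) t) = \<sigma> s t) F"
    and "\<And>s t. qf_sat v (eq s t) \<longleftrightarrow> \<sigma> s t = 0"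
    and "\<And>s t. qf_sat v (lt s t) \<longleftrightarrow> \<sigma> s t = - 1"
  shows "eventually (\<lambda>a. qf_sat (w a) p \<longleftrightarrow> qf_sat v (qf_map_atoms eq lt p)) F"
proof -
  have "eventually (\<lambda>a. \<forall>(s, t) \<in> set (qf_atoms p).
    sgn (tm_val (w a) s - tm_val (w a) t) = \<sigma> s t) F"
    using assms(1) by (intro eventually_ball_finite) auto
  then show ?thesis
    by eventually_elim
      (rule qf_sat_qf_map_atoms_cong, auto simp del: qf_sat.simps simp: qf_sat_atoms_sgn assms(2,3))
qed

definition qf_subst :: "nat \<Rightarrow> tm \<Rightarrow> qf \<Rightarrow> qf" where
  "qf_subst x u = qf_map_atoms (\<lambda>s t. Eq (tm_subst x u s) (tm_subst x u t))
                                (\<lambda>s t. Less (tm_subst x u s) (tm_subst x u t))"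

lemma qf_sat_qf_subst: "qf_sat v (qf_subst x u p) \<longleftrightarrow> qf_sat (v(x := tm_val v u)) p"
  unfolding qf_subst_def
  by (rule qf_sat_qf_map_atoms_cong[symmetric]) (auto simp: tm_val_tm_subst)

lemma qf_sat_qf_subst_atoms:
  "qf_sat v (qf_subst x u (Eq s t)) \<longleftrightarrow> atom_slope x s t * tm_val v u + atom_offset v x s t = 0"
  "qf_sat v (qf_subst x u (Less s t)) \<longleftrightarrow> atom_slope x s t * tm_val v u + atom_offset v x s t < 0"
  using tm_val_diff_fun_upd[of v x "tm_val v u" s t]
  by (simp_all add: qf_sat_qf_subst, linarith+)

definition qf_minus_inf :: "nat \<Rightarrow> qf \<Rightarrow> qf" where
  "qf_minus_inf x = qf_map_atoms
     (\<lambda>s t. if atom_slope x s t = 0 then qf_subst x (Scal 0 One) (Eq s t) else FFalse)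
     (\<lambda>s t. if atom_slope x s t = 0 then qf_subst x (Scal 0 One) (Less s t)
           else if atom_slope x s t > 0 then Neg FFalse else FFalse)"

definition qf_plus_eps :: "nat \<Rightarrow> tm \<Rightarrow> qf \<Rightarrow> qf" where
  "qf_plus_eps x u = qf_map_atoms
     (\<lambda>s t. if atom_slope x s t = 0 then qf_subst x u (Eq s t) else FFalse)
     (\<lambda>s t. Disj (qf_subst x u (Less s t))
                 (if atom_slope x s t < 0 then qf_subst x u (Eq s t) else FFalse))"

lemma eventually_qf_minus_inf:
  "eventually (\<lambda>a. qf_sat (v(x := a)) p \<longleftrightarrow> qf_sat v (qf_minus_inf x p)) at_bot"
  unfolding qf_minus_inf_def
proof (rule eventually_qf_sat_qf_map_atoms)
  fix s t
  define d e where "d = atom_slope x s t" and "e = atom_offset v x s t"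
  show "eventually (\<lambda>a. sgn (tm_val (v(x := a)) s - tm_val (v(x := a)) t) =
      (if d = 0 then sgn e else - sgn d)) at_bot"
    using eventually_sgn_affine_at_bot[of d e] by (simp add: tm_val_diff_fun_upd d_def e_def)
  show "qf_sat v (if d = 0 then qf_subst x (Scal 0 One) (Eq s t) else FFalse) \<longleftrightarrow>
      (if d = 0 then sgn e else - sgn d) = 0"
    "qf_sat v (if d = 0 then qf_subst x (Scal 0 One) (Less s t)
      else if d > 0 then Neg FFalse else FFalse) \<longleftrightarrow> (if d = 0 then sgn e else - sgn d) = - 1"
    using qf_sat_qf_subst_atoms[of v x "Scal 0 One" s t]
    by (auto simp: d_def e_def sgn_0_0 sgn_1_neg sgn_1_pos)
qed

lemma eventually_qf_plus_eps:
  "eventually (\<lambda>a. qf_sat (v(x := a)) p \<longleftrightarrow> qf_sat v (qf_plus_eps x u p)) (right_nbhds (tm_val v u))"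
  unfolding qf_plus_eps_def
proof (rule eventually_qf_sat_qf_map_atoms)
  fix s t
  define d e r where "d = atom_slope x s t" and "e = atom_offset v x s t" and "r = tm_val v u"
  show "eventually (\<lambda>a. sgn (tm_val (v(x := a)) s - tm_val (v(x := a)) t) =
      (if d * r + e = 0 then sgn d else sgn (d * r + e))) (right_nbhds (tm_val v u))"
    using eventually_sgn_affine_right_nbhds[of d e r] by (simp add: tm_val_diff_fun_upd d_def e_def r_def)
  show "qf_sat v (if d = 0 then qf_subst x u (Eq s t) else FFalse) \<longleftrightarrow>
      (if d * r + e = 0 then sgn d else sgn (d * r + e)) = 0"
    "qf_sat v (Disj (qf_subst x u (Less s t)) (if d < 0 then qf_subst x u (Eq s t) else FFalse)) \<longleftrightarrow>
      (if d * r + e = 0 then sgn d else sgn (d * r + e)) = - 1"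
    using qf_sat_qf_subst_atoms[of v x u s t]
    by (auto simp: d_def e_def r_def sgn_0_0 sgn_1_neg)
qed

definition qf_roots :: "nat \<Rightarrow> qf \<Rightarrow> tm list" where
  "qf_roots x p = [tm_root x s t. (s, t) \<leftarrow> qf_atoms p, atom_slope x s t \<noteq> 0]"

lemma qf_sat_fun_upd_eq_between_roots:
  assumes "a \<le> b" and roots: "\<forall>u \<in> set (qf_roots x p). tm_val v u \<notin> {a..b}"
  shows "qf_sat (v(x := a)) p \<longleftrightarrow> qf_sat (v(x := b)) p"
proof -
  have "sgn (tm_val (v(x := a)) s - tm_val (v(x := a)) t) =
        sgn (tm_val (v(x := b)) s - tm_val (v(x := b)) t)"
    if "(s, t) \<in> set (qf_atoms p)" for s t
  proof -
    have "atom_slope x s t \<noteq> 0 \<Longrightarrow> tm_val v (tm_root x s t) \<notin> {a..b}"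
      using roots that by (force simp: qf_roots_def)
    then show ?thesis
      using sgn_affine_eq_on_interval[OF \<open>a \<le> b\<close>, of "atom_slope x s t" "atom_offset v x s t"]
      by (simp add: tm_val_diff_fun_upd tm_val_tm_root)
  qed
  then have "qf_sat (v(x := a)) p \<longleftrightarrow> qf_sat (v(x := b)) (qf_map_atoms Eq Less p)"
    by (intro qf_sat_qf_map_atoms_cong) (auto simp del: qf_sat.simps simp: qf_sat_atoms_sgn)
  then show ?thesis by simp
qed

definition qf_elim :: "nat \<Rightarrow> qf \<Rightarrow> qf" where
  "qf_elim x p = Disj (qf_minus_inf x p)
     (foldr Disj [Disj (qf_subst x u p) (qf_plus_eps x u p). u \<leftarrow> qf_roots x p] FFalse)"

lemma qf_sat_foldr_Disj: "qf_sat v (foldr Disj ps FFalse) \<longleftrightarrow> (\<exists>p \<in> set ps. qf_sat v p)"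
  by (induction ps) auto

lemma qf_sat_qf_elim_iff:
  "qf_sat v (qf_elim x p) \<longleftrightarrow>
     qf_sat v (qf_minus_inf x p) \<or>
     (\<exists>u \<in> set (qf_roots x p). qf_sat v (qf_subst x u p) \<or> qf_sat v (qf_plus_eps x u p))"
  by (auto simp: qf_elim_def qf_sat_foldr_Disj)

lemma ex_qf_sat_fun_upd_if_qf_sat_qf_elim:
  assumes "qf_sat v (qf_elim x p)"
  shows "\<exists>a. qf_sat (v(x := a)) p"
proof -
  consider "qf_sat v (qf_minus_inf x p)" | u where "qf_sat v (qf_subst x u p)"
    | u where "qf_sat v (qf_plus_eps x u p)"
    using assms unfolding qf_sat_qf_elim_iff by blast
  then show ?thesis
  proof cases
    case 1
    then show ?thesis
      using eventually_happens'[OF _ eventually_qf_minus_inf] by force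
  next
    case 2
    then show ?thesis
      by (auto simp: qf_sat_qf_subst)
  next
    case (3 u)
    then show ?thesis
      using eventually_happens'[OF right_nbhds_neq_bot eventually_qf_plus_eps[of v x p u]] by blast
  qed
qed

lemma qf_sat_qf_minus_inf_if_left_of_roots:
  assumes "\<forall>w \<in> set (qf_roots x p). a < tm_val v w" and "qf_sat (v(x := a)) p"
  shows "qf_sat v (qf_minus_inf x p)"
proof -
  obtain N where N: "\<forall>b \<le> N. qf_sat (v(x := b)) p \<longleftrightarrow> qf_sat v (qf_minus_inf x p)"
    using eventually_qf_minus_inf[of v x p] unfolding eventually_at_bot_linorder by blast
  have "qf_sat (v(x := min a N)) p \<longleftrightarrow> qf_sat (v(x := a)) p"
    by (rule qf_sat_fun_upd_eq_between_roots) (use assms(1) in auto)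
  then show ?thesis
    using N assms(2) by simp
qed

lemma qf_sat_qf_plus_eps_if_right_of:
  assumes "tm_val v u < a" and "\<forall>w \<in> set (qf_roots x p). tm_val v w \<notin> {tm_val v u<..a}"
    and "qf_sat (v(x := a)) p"
  shows "qf_sat v (qf_plus_eps x u p)"
proof -
  let ?r = "tm_val v u"
  obtain c where "?r < c" and
    c: "\<forall>b. ?r < b \<and> b < c \<longrightarrow> (qf_sat (v(x := b)) p \<longleftrightarrow> qf_sat v (qf_plus_eps x u p))"
    using eventually_qf_plus_eps[of v x p u] unfolding eventually_right_nbhds by blast
  define b where "b = min a ((?r + c) / 2)"
  have "?r < b" "b < c" "b \<le> a"
    using assms(1) \<open>?r < c\<close> by (auto simp: b_def min_less_iff_disj field_simps)
  have "qf_sat (v(x := b)) p \<longleftrightarrow> qf_sat (v(x := a)) p"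
    by (rule qf_sat_fun_upd_eq_between_roots) (use assms(2) \<open>?r < b\<close> \<open>b \<le> a\<close> in force)+
  then show ?thesis
    using c \<open>?r < b\<close> \<open>b < c\<close> assms(3) by simp
qed

lemma qf_sat_qf_elim_if_qf_sat_fun_upd:
  assumes sat: "qf_sat (v(x := a)) p"
  shows "qf_sat v (qf_elim x p)"
proof -
  define R where "R = tm_val v ` set (qf_roots x p)"
  define L where "L = {\<rho> \<in> R. \<rho> < a}"
  consider "a \<in> R" | "a \<notin> R" "L = {}" | "a \<notin> R" "L \<noteq> {}"
    by blast
  then show ?thesis
  proof cases
    case 1
    then show ?thesis
      using sat by (auto simp: R_def qf_sat_qf_elim_iff qf_sat_qf_subst)
  next
    case 2
    then have "\<forall>w \<in> set (qf_roots x p). a < tm_val v w"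
      by (force simp: R_def L_def)
    then show ?thesis
      using qf_sat_qf_minus_inf_if_left_of_roots sat by (simp add: qf_sat_qf_elim_iff)
  next
    case 3
    have "finite L"
      by (simp add: R_def L_def)
    then have "Max L \<in> L" and L_le_Max: "\<And>\<rho>. \<rho> \<in> L \<Longrightarrow> \<rho> \<le> Max L"
      using 3 by auto
    then obtain u where u: "u \<in> set (qf_roots x p)" "tm_val v u = Max L" "tm_val v u < a"
      by (auto simp: R_def L_def)
    have "\<forall>w \<in> set (qf_roots x p). tm_val v w \<notin> {tm_val v u<..a}"
      using 3 L_le_Max u(2) by (force simp: R_def L_def)
    then show ?thesis
      using qf_sat_qf_plus_eps_if_right_of[OF u(3) _ sat] u(1) by (auto simp: qf_sat_qf_elim_iff)
  qed
qed

lemma qf_sat_qf_elim: "qf_sat v (qf_elim x p) \<longleftrightarrow> (\<exists>a. qf_sat (v(x := a)) p)"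
  using ex_qf_sat_fun_upd_if_qf_sat_qf_elim qf_sat_qf_elim_if_qf_sat_fun_upd by blast

theorem lemma1:
  fixes \<phi> :: qf and x :: nat
  shows "\<exists>\<psi> :: qf. \<forall>v :: nat \<Rightarrow> rat.
           (\<exists>a :: rat. qf_sat (v(x := a)) \<phi>) \<longleftrightarrow> qf_sat v \<psi>"
  using qf_sat_qf_elim by blast

end
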